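(* Let $\mathsf{X}$ be a totally ordered set with a $\sigma$-field $\mathcal X$ containing the sets $(-\infty,a]$, and let $P$ be a stochastically monotone Markov kernel on $\mathsf{X}$. Suppose that for $C=(-\infty,x_0]$ there exist $\epsilon>0$ and a probability measure $\nu$ with $P(x,\cdot)\geq\epsilon\nu(\cdot)$ for all $x\in C$; let $Q$ be the residual kernel ($Q(x,A)=(1-\epsilon)^{-1}(P(x,A)-\epsilon\nu(A))$ if $0<\epsilon<1$, $Q=\nu$ if $\epsilon=1$). Assume there exist $W_0:\mathsf{X}\to[1,\infty)$ and $\phi\in\mathcal{C}$ such that $PW_0(x)\leq W_0(x)-\phi(W_0(x))$ for $x\notin C$ and $\sup_C PW_0<\infty$. Let $r=r_\phi$, $v_0=\phi\circ W_0$, $\sigma_C=\inf\{n\geq0:X_n\in C\}$, $U_0(x)=\mathbb{E}_x\big[\sum_{k=0}^{\sigma_C}r(k)\big]$ and $V_0(x)=\mathbb{E}_x\big[\sum_{k=0}^{\sigma_C}v_0(X_k)\big]$. Then $U_0$, $V_0$ are finite everywhere, $b_{U_0}:=\sup_CQU_0<\infty$, $b_{V_0}:=\sup_CQV_0<\infty$, and $$U_0(x)\leq 1+\frac{r_\phi(1)}{\phi(1)}\{W_0(x)-1\}\mathbb{1}_{C^c}(x),\qquad V_0(x)\leq\sup_C\phi\circ W_0+W_0(x)\mathbb{1}_{C^c}(x),$$ $$b_{U_0}\leq 1+\frac{r_\phi(1)}{\phi(1)}\Big((1-\epsilon)^{-1}\Big\{\sup_CPW_0-\epsilon\nu(W_0)\Big\}-1\Big),\qquad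 b_{V_0}\leq\sup_C\phi\circ W_0+(1-\epsilon)^{-1}\Big\{\sup_CPW_0-\epsilon\nu(W_0)\Big\}.$$
   Context: Stochastically monotone: $x\mapsto P(x,(-\infty,a])$ is non-increasing for every $a$. $\mathbb{E}_x$ is expectation for the chain with kernel $P$ started at $x$. $\mathcal{C}$ is the set of functions $\phi:[1,\infty)\to\mathbb{R}^+$ that are concave and differentiable with $\phi(1)>0$, $\lim_{v\to\infty}\phi(v)=\infty$, $\lim_{v\to\infty}\phi'(v)=0$. For $\phi\in\mathcal C$, $H_\phi(v)=\int_1^v dx/\phi(x)$, $H_\phi^{-1}$ its inverse on $[0,\infty)$, and $r_\phi(n)=\phi(H_\phi^{-1}(n))/\phi(H_\phi^{-1}(0))$. *)

theory Defs
  imports "HOL-Probability.Probability"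
begin

definition phi_class :: "(real \<Rightarrow> real) \<Rightarrow> bool" where
  "phi_class phi \<longleftrightarrow>
     concave_on {1..} phi \<and>
     phi differentiable_on {1..} \<and>
     (\<forall>v\<ge>1. 0 < phi v) \<and>
     0 < phi 1 \<and>
     filterlim phi at_top at_top \<and>
     ((\<lambda>v. deriv phi v) \<longlongrightarrow> 0) at_top"

definition H_phi :: "(real \<Rightarrow> real) \<Rightarrow> real \<Rightarrow> real" where
  "H_phi phi v = integral {1..v} (\<lambda>x. 1 / phi x)"

definition H_phi_inv :: "(real \<Rightarrow> real) \<Rightarrow> real \<Rightarrow> real" where
  "H_phi_inv phi t = (THE v. 1 \<le> v \<and> H_phi phi v = t)"

definition r_phi :: "(real \<Rightarrow> real) \<Rightarrow> nat \<Rightarrow> real" where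
  "r_phi phi n = phi (H_phi_inv phi (real n)) / phi (H_phi_inv phi 0)"

definition path_space :: "'a measure \<Rightarrow> (nat \<Rightarrow> 'a) measure" where
  "path_space M = Pi\<^sub>M UNIV (\<lambda>_::nat. M)"

text \<open>Law under P_x of the trajectory (X_0,...,X_n) of the chain with kernel P started
  at x, realised as a measure on paths nat => 'a (coordinates beyond n are irrelevant).\<close>
primrec chain_path :: "'a measure \<Rightarrow> ('a \<Rightarrow> 'a measure) \<Rightarrow> 'a \<Rightarrow> nat \<Rightarrow> (nat \<Rightarrow> 'a) measure" where
  "chain_path M P x 0 = return (path_space M) (\<lambda>_. x)"
| "chain_path M P x (Suc n) =
     chain_path M P x n \<bind> (\<lambda>\<omega>. distr (P (\<omega> n)) (path_space M) (\<lambda>y. fun_upd \<omega> (Suc n) y))"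

text \<open>E_x [ sum_{k=0}^{sigma_C} f k (X_k) ], sigma_C = inf{n >= 0. X_n in C}.
  The index k satisfies k <= sigma_C iff X_j notin C for all j < k.  The expectation of the
  (possibly infinite) sum is the monotone limit of the expectations of the sums truncated at n,
  each of which depends only on (X_0,...,X_n).\<close>
definition exp_sum_to_hit ::
  "'a measure \<Rightarrow> ('a \<Rightarrow> 'a measure) \<Rightarrow> 'a set \<Rightarrow> (nat \<Rightarrow> 'a \<Rightarrow> ennreal) \<Rightarrow> 'a \<Rightarrow> ennreal" where
  "exp_sum_to_hit M P C f x =
     (SUP n. \<integral>\<^sup>+ \<omega>. (\<Sum>k\<in>{k. k \<le> n \<and> (\<forall>j<k. \<omega> j \<notin> C)}. f k (\<omega> k)) \<partial>chain_path M P x n)"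

definition residual_kernel ::
  "'a measure \<Rightarrow> ('a \<Rightarrow> 'a measure) \<Rightarrow> 'a measure \<Rightarrow> real \<Rightarrow> 'a \<Rightarrow> 'a measure" where
  "residual_kernel M P \<nu> \<epsilon> x =
     (if \<epsilon> = 1 then \<nu>
      else measure_of (space M) (sets M)
             (\<lambda>A. (emeasure (P x) A - ennreal \<epsilon> * emeasure \<nu> A) / ennreal (1 - \<epsilon>)))"

definition stoch_monotone :: "('a::linorder) measure \<Rightarrow> ('a \<Rightarrow> 'a measure) \<Rightarrow> bool" where
  "stoch_monotone M P \<longleftrightarrow> (\<forall>a x y. x \<le> y \<longrightarrow> measure (P y) {..a} \<le> measure (P x) {..a})"

end

theory Submission
  imports Defs
begin

(*
  U0 and V0 are expected sums up to the hitting time of C, so both are bounded by the comparison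
  theorem: if the functions Phi_n satisfy P (f (n+1) + 1_(-C) Phi_(n+1)) <= Phi_n outside C, then
  the partial sums plus 1_(n <= sigma_C) Phi_n (X_n) form a supermartingale, and the expected sum
  is at most f 0 + 1_(-C) Phi_0.
  For V0 the drift condition gives Phi = W0 - phi o W0 + sup_C phi o W0 directly.
  For U0 take Phi_n = r(1)/phi(1) (Hinv (H W0 + n) - Hinv n). Three facts about phi make this
  work: u |-> Hinv (H u + t) is concave, so its tangent at W0 x - phi (W0 x) can be integrated
  against the drift condition; ln o phi o Hinv is concave, so r(n+1) <= r(1)/phi(1) phi (Hinv n)
  <= r(1)/phi(1) (Hinv (n+1) - Hinv n); and H w - H (w - phi w) >= 1.
  The bounds for Q follow by integrating over P x = (1 - eps) Q x + eps nu for x in C.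
*)

section \<open>Expected sums up to the hitting time\<close>

lemma space_path_space: "space M = UNIV \<Longrightarrow> space (path_space M) = UNIV"
  by (simp add: path_space_def space_PiM)

lemma measurable_path_fun_upd:
  assumes "space M = UNIV"
  shows "(\<lambda>(\<omega>, y). fun_upd \<omega> n y) \<in> path_space M \<Otimes>\<^sub>M M \<rightarrow>\<^sub>M path_space M"
  unfolding path_space_def
proof (rule measurable_PiM_single')
  fix i
  show "(\<lambda>x. (case x of (\<omega>, y) \<Rightarrow> fun_upd \<omega> n y) i) \<in> Pi\<^sub>M UNIV (\<lambda>_. M) \<Otimes>\<^sub>M M \<rightarrow>\<^sub>M M"
    by (cases "i = n") (simp_all add: case_prod_beta', measurable)
qed (auto simp: assms space_PiM)

lemma measurable_path_fun_upd_right: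
  assumes "space M = UNIV"
  shows "(\<lambda>y. fun_upd \<omega> n y) \<in> M \<rightarrow>\<^sub>M path_space M"
  unfolding path_space_def
  by (rule measurable_PiM_single') (auto simp: assms space_PiM)

lemma measurable_path_component: "(\<lambda>\<omega>. \<omega> j) \<in> path_space M \<rightarrow>\<^sub>M M"
  unfolding path_space_def by measurable

lemma sets_chain_path:
  assumes "space M = UNIV"
  shows "sets (chain_path M P x n) = sets (path_space M)"
proof (induction n)
  case (Suc n)
  then have "space (chain_path M P x n) = UNIV"
    using sets_eq_imp_space_eq space_path_space[OF assms] by metis
  then show ?case by (simp add: Suc)
qed simp

lemma nn_integral_chain_path_Suc:
  assumes sp: "space M = UNIV" and K: "P \<in> M \<rightarrow>\<^sub>M prob_algebra M"
    and g: "g \<in> borel_measurable (path_space M)"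
  shows "(\<integral>\<^sup>+\<omega>. g \<omega> \<partial>chain_path M P x (Suc n))
       = (\<integral>\<^sup>+\<omega>. (\<integral>\<^sup>+y. g (fun_upd \<omega> (Suc n) y) \<partial>P (\<omega> n)) \<partial>chain_path M P x n)"
proof -
  note sets_cp = sets_chain_path[OF sp]
  have sets_P: "sets (P y) = sets M" for y
    using measurable_space[OF K] by (simp add: space_prob_algebra sp)
  define N where "N \<omega> = distr (P (\<omega> n)) (path_space M) (\<lambda>y. fun_upd \<omega> (Suc n) y)" for \<omega>
  have "N \<in> chain_path M P x n \<rightarrow>\<^sub>M subprob_algebra (path_space M)"
    unfolding N_def
  proof (rule measurable_distr2)
    show "(\<lambda>(\<omega>, y). fun_upd \<omega> (Suc n) y) \<in> chain_path M P x n \<Otimes>\<^sub>M M \<rightarrow>\<^sub>M path_space M"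
      using measurable_path_fun_upd[OF sp]
      by (simp add: sets_cp cong: measurable_cong_sets sets_pair_measure_cong)
    show "(\<lambda>\<omega>. P (\<omega> n)) \<in> chain_path M P x n \<rightarrow>\<^sub>M subprob_algebra M"
      using measurable_comp[OF measurable_path_component measurable_prob_algebraD[OF K]]
      by (simp add: sets_cp o_def cong: measurable_cong_sets)
  qed
  then have "(\<integral>\<^sup>+\<omega>. g \<omega> \<partial>chain_path M P x (Suc n)) = (\<integral>\<^sup>+\<omega>. (\<integral>\<^sup>+\<omega>'. g \<omega>' \<partial>N \<omega>) \<partial>chain_path M P x n)"
    unfolding chain_path.simps(2) N_def[symmetric] by (rule nn_integral_bind[OF g])
  also have "\<dots> = (\<integral>\<^sup>+\<omega>. (\<integral>\<^sup>+y. g (fun_upd \<omega> (Suc n) y) \<partial>P (\<omega> n)) \<partial>chain_path M P x n)"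
    unfolding N_def using g
    by (subst nn_integral_distr)
      (auto simp: measurable_path_fun_upd_right[OF sp] measurable_cong_sets[OF sets_P refl])
  finally show ?thesis .
qed

definition hit_partial_sum :: "'a set \<Rightarrow> (nat \<Rightarrow> 'a \<Rightarrow> ennreal) \<Rightarrow> nat \<Rightarrow> (nat \<Rightarrow> 'a) \<Rightarrow> ennreal" where
  "hit_partial_sum C f n \<omega> = (\<Sum>k\<in>{k. k \<le> n \<and> (\<forall>j<k. \<omega> j \<notin> C)}. f k (\<omega> k))"

lemma exp_sum_to_hit_eq_SUP:
  "exp_sum_to_hit M P C f x = (SUP n. \<integral>\<^sup>+\<omega>. hit_partial_sum C f n \<omega> \<partial>chain_path M P x n)"
  unfolding exp_sum_to_hit_def hit_partial_sum_def ..

lemma hit_partial_sum_eq: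
  "hit_partial_sum C f n \<omega> = (\<Sum>k\<le>n. if \<forall>j<k. \<omega> j \<notin> C then f k (\<omega> k) else 0)"
  unfolding hit_partial_sum_def by (subst sum.inter_filter[symmetric]) (auto intro: sum.cong)

lemma hit_partial_sum_0: "hit_partial_sum C f 0 \<omega> = f 0 (\<omega> 0)"
  by (simp add: hit_partial_sum_eq)

lemma hit_partial_sum_Suc:
  "hit_partial_sum C f (Suc n) \<omega>
     = hit_partial_sum C f n \<omega> + (if \<forall>j\<le>n. \<omega> j \<notin> C then f (Suc n) (\<omega> (Suc n)) else 0)"
  by (simp add: hit_partial_sum_eq less_Suc_eq_le)

lemma hit_partial_sum_fun_upd: "hit_partial_sum C f n (fun_upd \<omega> (Suc n) y) = hit_partial_sum C f n \<omega>"
  unfolding hit_partial_sum_eq by (intro sum.cong) auto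

lemma borel_measurable_hit_partial_sum:
  assumes [measurable]: "C \<in> sets M" "\<And>k. f k \<in> borel_measurable M"
  shows "hit_partial_sum C f n \<in> borel_measurable (path_space M)"
proof -
  have [measurable]: "(\<lambda>\<omega>. \<omega> j) \<in> path_space M \<rightarrow>\<^sub>M M" for j
    by (rule measurable_path_component)
  show ?thesis unfolding hit_partial_sum_eq by measurable
qed

definition hit_drift_process ::
  "'a set \<Rightarrow> (nat \<Rightarrow> 'a \<Rightarrow> ennreal) \<Rightarrow> (nat \<Rightarrow> 'a \<Rightarrow> ennreal) \<Rightarrow> nat \<Rightarrow> (nat \<Rightarrow> 'a) \<Rightarrow> ennreal" where
  "hit_drift_process C f \<Phi> n \<omega> =
     hit_partial_sum C f n \<omega> + (if \<forall>j\<le>n. \<omega> j \<notin> C then \<Phi> n (\<omega> n) else 0)"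

lemma hit_drift_process_supermartingale:
  assumes "prob_space N" and sets_N: "sets N = sets M" and [measurable]: "C \<in> sets M"
    and [measurable]: "f (Suc n) \<in> borel_measurable M" "\<Phi> (Suc n) \<in> borel_measurable M"
    and drift: "\<omega> n \<notin> C \<Longrightarrow> (\<integral>\<^sup>+z. f (Suc n) z + indicator (-C) z * \<Phi> (Suc n) z \<partial>N) \<le> \<Phi> n (\<omega> n)"
  shows "(\<integral>\<^sup>+y. hit_drift_process C f \<Phi> (Suc n) (fun_upd \<omega> (Suc n) y) \<partial>N) \<le> hit_drift_process C f \<Phi> n \<omega>"
proof (cases "\<forall>j\<le>n. \<omega> j \<notin> C")
  case True
  have "(\<lambda>y. f (Suc n) y + indicator (-C) y * \<Phi> (Suc n) y) \<in> borel_measurable M"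
    by measurable
  then have meas: "(\<lambda>y. f (Suc n) y + indicator (-C) y * \<Phi> (Suc n) y) \<in> borel_measurable N"
    using sets_N by (simp cong: measurable_cong_sets)
  have "(\<integral>\<^sup>+y. hit_drift_process C f \<Phi> (Suc n) (fun_upd \<omega> (Suc n) y) \<partial>N)
      = (\<integral>\<^sup>+y. hit_partial_sum C f n \<omega> + (f (Suc n) y + indicator (-C) y * \<Phi> (Suc n) y) \<partial>N)"
    using True by (intro nn_integral_cong)
      (auto simp: hit_drift_process_def hit_partial_sum_Suc hit_partial_sum_fun_upd le_Suc_eq indicator_def)
  also have "\<dots> = hit_partial_sum C f n \<omega> + (\<integral>\<^sup>+y. f (Suc n) y + indicator (-C) y * \<Phi> (Suc n) y \<partial>N)"
    using prob_space.emeasure_space_1[OF \<open>prob_space N\<close>] by (simp add: nn_integral_add meas)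
  also have "\<dots> \<le> hit_drift_process C f \<Phi> n \<omega>"
    using drift True by (auto simp: hit_drift_process_def intro: add_left_mono)
  finally show ?thesis .
next
  case False
  then have "hit_drift_process C f \<Phi> (Suc n) (fun_upd \<omega> (Suc n) y) = hit_drift_process C f \<Phi> n \<omega>" for y
    by (auto simp: hit_drift_process_def hit_partial_sum_Suc hit_partial_sum_fun_upd)
  then show ?thesis
    using prob_space.emeasure_space_1[OF \<open>prob_space N\<close>] by simp
qed

lemma exp_sum_to_hit_le_drift:
  assumes sp: "space M = UNIV" and K: "P \<in> M \<rightarrow>\<^sub>M prob_algebra M"
    and C_meas[measurable]: "C \<in> sets M" and f_meas[measurable]: "\<And>k. f k \<in> borel_measurable M"
    and \<Phi>_meas[measurable]: "\<And>n. \<Phi> n \<in> borel_measurable M"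
    and drift: "\<And>n y. y \<notin> C \<Longrightarrow>
      (\<integral>\<^sup>+z. f (Suc n) z + indicator (-C) z * \<Phi> (Suc n) z \<partial>P y) \<le> \<Phi> n y"
  shows "exp_sum_to_hit M P C f x \<le> f 0 x + indicator (-C) x * \<Phi> 0 x"
proof -
  let ?A = "hit_drift_process C f \<Phi>"
  have P: "prob_space (P y)" "sets (P y) = sets M" for y
    using measurable_space[OF K] by (simp_all add: space_prob_algebra sp)
  have [measurable]: "(\<lambda>\<omega>. \<omega> j) \<in> path_space M \<rightarrow>\<^sub>M M" for j
    by (rule measurable_path_component)
  have [measurable]: "hit_partial_sum C f n \<in> borel_measurable (path_space M)" for n
    using C_meas f_meas by (rule borel_measurable_hit_partial_sum)
  have [measurable]: "?A n \<in> borel_measurable (path_space M)" for n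
    unfolding hit_drift_process_def by measurable
  have A_bound: "(\<integral>\<^sup>+\<omega>. ?A n \<omega> \<partial>chain_path M P x n) \<le> f 0 x + indicator (-C) x * \<Phi> 0 x" for n
  proof (induction n)
    case 0
    have "?A 0 (\<lambda>_. x) = f 0 x + indicator (-C) x * \<Phi> 0 x"
      by (simp add: hit_drift_process_def hit_partial_sum_0 indicator_def)
    then show ?case by (simp add: nn_integral_return space_path_space[OF sp])
  next
    case (Suc n)
    have "(\<integral>\<^sup>+\<omega>. ?A (Suc n) \<omega> \<partial>chain_path M P x (Suc n))
        = (\<integral>\<^sup>+\<omega>. (\<integral>\<^sup>+y. ?A (Suc n) (fun_upd \<omega> (Suc n) y) \<partial>P (\<omega> n)) \<partial>chain_path M P x n)"
      by (rule nn_integral_chain_path_Suc[OF sp K]) measurable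
    also have "\<dots> \<le> (\<integral>\<^sup>+\<omega>. ?A n \<omega> \<partial>chain_path M P x n)"
      using P drift by (intro nn_integral_mono hit_drift_process_supermartingale) auto
    finally show ?case using Suc.IH by (rule order_trans)
  qed
  have "(\<integral>\<^sup>+\<omega>. hit_partial_sum C f n \<omega> \<partial>chain_path M P x n) \<le> (\<integral>\<^sup>+\<omega>. ?A n \<omega> \<partial>chain_path M P x n)" for n
    by (intro nn_integral_mono) (simp add: hit_drift_process_def)
  then show ?thesis
    unfolding exp_sum_to_hit_eq_SUP using A_bound by (intro SUP_least) (rule order_trans)
qed

section \<open>The rate functions of the class C\<close>

locale concave_rate =
  fixes \<phi> :: "real \<Rightarrow> real"
  assumes phi_class: "phi_class \<phi>"
begin

abbreviation H where "H \<equiv> H_phi \<phi>"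
abbreviation Hinv where "Hinv \<equiv> H_phi_inv \<phi>"

lemma phi_concave: "concave_on {1..} \<phi>"
  and phi_differentiable: "\<phi> differentiable_on {1..}"
  and phi_pos: "1 \<le> v \<Longrightarrow> 0 < \<phi> v"
  using phi_class unfolding phi_class_def by auto

lemma continuous_on_phi: "continuous_on {1..} \<phi>"
  by (rule differentiable_imp_continuous_on[OF phi_differentiable])

lemma phi_has_derivative:
  assumes "1 < x" shows "(\<phi> has_real_derivative deriv \<phi> x) (at x)"
proof -
  have "\<phi> differentiable at x within {1..}"
    using phi_differentiable assms unfolding differentiable_on_def by auto
  moreover have "at x within {1..} = at x" using assms by (intro at_within_interior) auto
  ultimately have "\<phi> differentiable at x" by simp
  then show ?thesis using DERIV_deriv_iff_real_differentiable by blast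
qed

lemma phi_le_tangent:
  assumes c: "1 < c" and x: "1 \<le> x" shows "\<phi> x \<le> \<phi> c + deriv \<phi> c * (x - c)"
proof -
  have convex: "convex_on {1..} (\<lambda>x. - \<phi> x)" using phi_concave by (simp add: concave_on_def)
  have deriv: "((\<lambda>x. - \<phi> x) has_field_derivative - deriv \<phi> c) (at c within {1..})"
    using phi_has_derivative[OF c] by (intro DERIV_minus) (rule has_field_derivative_at_within)
  have "- deriv \<phi> c * (x - c) \<le> - \<phi> x - - \<phi> c"
    by (rule convex_on_imp_above_tangent[OF convex _ _ _ deriv])
      (use c x in \<open>simp_all add: is_interval_connected\<close>)
  then show ?thesis by (simp add: algebra_simps)
qed

lemma deriv_phi_nonneg:
  assumes c: "1 < c" shows "0 \<le> deriv \<phi> c"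
proof (rule ccontr)
  assume "\<not> 0 \<le> deriv \<phi> c"
  then have d: "deriv \<phi> c < 0" by simp
  define x where "x = c + \<phi> c / (- deriv \<phi> c)"
  have "x > c" unfolding x_def using phi_pos[of c] c d by (simp add: divide_pos_neg)
  then have "\<phi> x \<le> \<phi> c + deriv \<phi> c * (x - c)" using c by (intro phi_le_tangent) auto
  also have "\<dots> = 0" unfolding x_def using d by simp
  finally show False using phi_pos[of x] \<open>x > c\<close> c by linarith
qed

lemma deriv_phi_antimono:
  assumes "1 < a" "a \<le> b" shows "deriv \<phi> b \<le> deriv \<phi> a"
proof (cases "a = b")
  case False
  have "\<phi> b \<le> \<phi> a + deriv \<phi> a * (b - a)" "\<phi> a \<le> \<phi> b + deriv \<phi> b * (a - b)"
    using phi_le_tangent assms by auto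
  then have "deriv \<phi> b * (b - a) \<le> deriv \<phi> a * (b - a)" by (simp add: algebra_simps)
  then show ?thesis using assms False by simp
qed simp

lemma phi_mono:
  assumes "1 \<le> a" "a \<le> b" shows "\<phi> a \<le> \<phi> b"
proof (rule DERIV_nonneg_imp_increasing_open[OF assms(2)])
  fix x assume "a < x" "x < b"
  then have "1 < x" using assms by simp
  then show "\<exists>y. (\<phi> has_real_derivative y) (at x) \<and> 0 \<le> y"
    using phi_has_derivative deriv_phi_nonneg by blast
qed (rule continuous_on_subset[OF continuous_on_phi], use assms in auto)

lemma phi_le_linear: "\<exists>K>0. \<forall>x\<ge>1. \<phi> x \<le> K * x"
proof (intro exI conjI allI impI)
  show "0 < \<phi> 2 + deriv \<phi> 2" using phi_pos[of 2] deriv_phi_nonneg[of 2] by simp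
  fix x :: real assume x: "1 \<le> x"
  have "(\<phi> 2 + deriv \<phi> 2) * x - (\<phi> 2 + deriv \<phi> 2 * (x - 2)) = \<phi> 2 * (x - 1) + 2 * deriv \<phi> 2"
    by (simp add: algebra_simps)
  moreover have "0 \<le> \<phi> 2 * (x - 1) + 2 * deriv \<phi> 2"
    using phi_pos[of 2] deriv_phi_nonneg[of 2] x by simp
  moreover have "\<phi> x \<le> \<phi> 2 + deriv \<phi> 2 * (x - 2)" using phi_le_tangent[of 2 x] x by simp
  ultimately show "\<phi> x \<le> (\<phi> 2 + deriv \<phi> 2) * x" by linarith
qed

lemma continuous_on_inverse_phi: "continuous_on {1..b} (\<lambda>x. 1 / \<phi> x)"
  using phi_pos by (intro continuous_intros continuous_on_subset[OF continuous_on_phi]) (auto simp: less_le)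

lemma H_has_derivative_within:
  assumes "1 \<le> v" "v \<le> b" shows "(H has_real_derivative 1 / \<phi> v) (at v within {1..b})"
  unfolding H_phi_def[abs_def]
  by (rule integral_has_real_derivative[OF continuous_on_inverse_phi]) (use assms in simp)

lemma H_has_derivative:
  assumes "1 < v" shows "(H has_real_derivative 1 / \<phi> v) (at v)"
proof -
  have "at v within {1..v+1} = at v" by (rule at_within_interior) (use assms in simp)
  then show ?thesis using H_has_derivative_within[of v "v + 1"] assms by simp
qed

lemma continuous_on_H: assumes "1 \<le> a" shows "continuous_on {a..b} H"
proof -
  have "continuous_on {1..b} H"
  proof (rule continuous_on_eq_continuous_within[THEN iffD2], intro ballI)
    fix v assume "v \<in> {1..b}"
    then show "continuous (at v within {1..b}) H"
      using H_has_derivative_within[of v b] by (intro DERIV_continuous) auto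
  qed
  then show ?thesis by (rule continuous_on_subset) (use assms in auto)
qed

lemma H_1[simp]: "H 1 = 0" by (simp add: H_phi_def)

lemma H_strict_mono: assumes "1 \<le> a" "a < b" shows "H a < H b"
proof (rule DERIV_pos_imp_increasing_open[OF assms(2)])
  fix x assume "a < x" "x < b"
  then have "1 < x" using assms by simp
  then show "\<exists>y. (H has_real_derivative y) (at x) \<and> 0 < y"
    using H_has_derivative phi_pos by (intro exI conjI) auto
qed (rule continuous_on_H[OF assms(1)])

lemma H_mono: "1 \<le> a \<Longrightarrow> a \<le> b \<Longrightarrow> H a \<le> H b"
  using H_strict_mono[of a b] by (cases "a = b") auto

lemma H_nonneg: "1 \<le> v \<Longrightarrow> 0 \<le> H v"
  using H_mono[of 1 v] by simp

lemma H_pos: "1 < v \<Longrightarrow> 0 < H v"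
  using H_strict_mono[of 1 v] by simp

lemma H_inj: "1 \<le> a \<Longrightarrow> 1 \<le> b \<Longrightarrow> H a = H b \<Longrightarrow> a = b"
  using H_strict_mono[of a b] H_strict_mono[of b a] by (cases a b rule: linorder_cases) auto

lemma H_ge_ln:
  assumes K: "0 < K" "\<And>x. 1 \<le> x \<Longrightarrow> \<phi> x \<le> K * x" and v: "1 \<le> v"
  shows "ln v / K \<le> H v"
proof -
  have "(\<lambda>u. H u - ln u / K) 1 \<le> (\<lambda>u. H u - ln u / K) v"
  proof (rule DERIV_nonneg_imp_increasing_open[OF v])
    fix x assume x: "1 < x" "x < v"
    have "((\<lambda>u. H u - ln u / K) has_real_derivative 1 / \<phi> x - (1 / x) / K) (at x)"
      using x by (intro DERIV_diff H_has_derivative DERIV_cdivide DERIV_ln_divide) auto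
    moreover have "(1 / x) / K \<le> 1 / \<phi> x"
      using K(2)[of x] phi_pos[of x] x by (simp add: divide_simps mult.commute)
    ultimately show "\<exists>y. ((\<lambda>u. H u - ln u / K) has_real_derivative y) (at x) \<and> 0 \<le> y"
      by (intro exI conjI) auto
  qed (use K in \<open>auto intro!: continuous_intros continuous_on_H\<close>)
  then show ?thesis by simp
qed

lemma H_diff_ge:
  assumes p: "1 \<le> p" and pv: "p \<le> v" shows "(v - p) / \<phi> v \<le> H v - H p"
proof -
  have "(\<lambda>u. H u - u / \<phi> v) p \<le> (\<lambda>u. H u - u / \<phi> v) v"
  proof (rule DERIV_nonneg_imp_increasing_open[OF pv])
    fix x assume x: "p < x" "x < v"
    have "((\<lambda>u. H u - u / \<phi> v) has_real_derivative 1 / \<phi> x - 1 / \<phi> v) (at x)"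
      using x p by (intro DERIV_diff H_has_derivative DERIV_cdivide DERIV_ident) auto
    moreover have "1 / \<phi> v \<le> 1 / \<phi> x"
      using phi_mono[of x v] phi_pos[of x] x p by (intro divide_left_mono) auto
    ultimately show "\<exists>y. ((\<lambda>u. H u - u / \<phi> v) has_real_derivative y) (at x) \<and> 0 \<le> y"
      by (intro exI conjI) auto
  next
    show "continuous_on {p..v} (\<lambda>u. H u - u / \<phi> v)"
      using phi_pos[of v] p pv by (intro continuous_intros continuous_on_H p) auto
  qed
  then show ?thesis by (simp add: diff_divide_distrib)
qed

lemma H_surj:
  assumes t: "0 \<le> t" shows "\<exists>v\<ge>1. H v = t"
proof -
  obtain K where K: "0 < K" "\<And>x. 1 \<le> x \<Longrightarrow> \<phi> x \<le> K * x"
    using phi_le_linear by auto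
  define b where "b = exp (K * t)"
  have b: "1 \<le> b" unfolding b_def using K t by simp
  have "t = ln b / K" unfolding b_def using K by simp
  also have "\<dots> \<le> H b" by (rule H_ge_ln[OF K b])
  finally have "\<exists>v. 1 \<le> v \<and> v \<le> b \<and> H v = t"
    using t b by (intro IVT' continuous_on_H) auto
  then show ?thesis by auto
qed

lemma Hinv: assumes "0 \<le> t" shows Hinv_ge_1: "1 \<le> Hinv t" and H_Hinv: "H (Hinv t) = t"
proof -
  have "\<exists>!v. 1 \<le> v \<and> H v = t" using H_surj[OF assms] H_inj by blast
  then have "1 \<le> Hinv t \<and> H (Hinv t) = t"
    unfolding H_phi_inv_def by (rule theI')
  then show "1 \<le> Hinv t" "H (Hinv t) = t" by auto
qed

lemma Hinv_H: "1 \<le> v \<Longrightarrow> Hinv (H v) = v"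
  using Hinv[OF H_nonneg] H_inj by metis

lemma Hinv_0[simp]: "Hinv 0 = 1"
  using Hinv_H[of 1] by simp

lemma Hinv_strict_mono: assumes "0 \<le> s" "s < t" shows "Hinv s < Hinv t"
proof (rule ccontr)
  assume "\<not> Hinv s < Hinv t"
  then have "H (Hinv t) \<le> H (Hinv s)" using Hinv_ge_1[of t] assms by (intro H_mono) auto
  then show False using H_Hinv[of s] H_Hinv[of t] assms by simp
qed

lemma Hinv_mono: "0 \<le> s \<Longrightarrow> s \<le> t \<Longrightarrow> Hinv s \<le> Hinv t"
  using Hinv_strict_mono[of s t] by (cases "s = t") auto

lemma Hinv_gt_1: "0 < t \<Longrightarrow> 1 < Hinv t"
  using Hinv_strict_mono[of 0 t] by simp

lemma phi_Hinv_pos: "0 \<le> t \<Longrightarrow> 0 < \<phi> (Hinv t)"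
  using phi_pos Hinv_ge_1 by blast

lemma continuous_on_Hinv: assumes "0 \<le> a" shows "continuous_on {a..b} Hinv"
proof (cases "a \<le> b")
  case True
  have "H ` {1..Hinv b} = {0..b}"
  proof
    show "H ` {1..Hinv b} \<subseteq> {0..b}"
    proof
      fix y assume "y \<in> H ` {1..Hinv b}"
      then obtain x where x: "1 \<le> x" "x \<le> Hinv b" "y = H x" by auto
      then have "H x \<le> H (Hinv b)" by (intro H_mono) auto
      then show "y \<in> {0..b}" using x H_nonneg[of x] H_Hinv[of b] True assms by simp
    qed
    show "{0..b} \<subseteq> H ` {1..Hinv b}"
    proof
      fix y assume y: "y \<in> {0..b}"
      then have "Hinv y \<in> {1..Hinv b}" using Hinv_ge_1[of y] Hinv_mono[of y b] by auto
      then show "y \<in> H ` {1..Hinv b}" using H_Hinv[of y] y by (metis atLeastAtMost_iff image_eqI)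
    qed
  qed
  moreover have "continuous_on (H ` {1..Hinv b}) Hinv"
    by (rule continuous_on_inv[OF continuous_on_H]) (auto intro: Hinv_H)
  ultimately have "continuous_on {0..b} Hinv" by simp
  then show ?thesis by (rule continuous_on_subset) (use assms in auto)
qed simp

lemma Hinv_has_derivative:
  assumes t: "0 < t" shows "(Hinv has_real_derivative \<phi> (Hinv t)) (at t)"
proof -
  have "(Hinv has_real_derivative inverse (1 / \<phi> (Hinv t))) (at t)"
  proof (rule DERIV_inverse_function[where f = H and a = 0 and b = "t + 1"])
    show "(H has_real_derivative 1 / \<phi> (Hinv t)) (at (Hinv t))"
      using H_has_derivative Hinv_gt_1 t by blast
    show "1 / \<phi> (Hinv t) \<noteq> 0" using phi_Hinv_pos[of t] t by simp
    show "\<And>y. 0 < y \<Longrightarrow> y < t + 1 \<Longrightarrow> H (Hinv y) = y" using H_Hinv by simp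
    show "isCont Hinv t"
      using continuous_on_Hinv[of 0 "t + 1"] t by (intro continuous_on_interior) auto
  qed (use t in auto)
  then show ?thesis by simp
qed

lemma ln_phi_Hinv_has_derivative:
  assumes s: "0 < s" shows "((\<lambda>s. ln (\<phi> (Hinv s))) has_real_derivative deriv \<phi> (Hinv s)) (at s)"
proof -
  have d: "((\<lambda>s. \<phi> (Hinv s)) has_real_derivative deriv \<phi> (Hinv s) * \<phi> (Hinv s)) (at s)"
    by (rule DERIV_chain2[OF phi_has_derivative Hinv_has_derivative[OF s]]) (rule Hinv_gt_1[OF s])
  have "((\<lambda>s. ln (\<phi> (Hinv s))) has_real_derivative
      1 / \<phi> (Hinv s) * (deriv \<phi> (Hinv s) * \<phi> (Hinv s))) (at s)"
    by (rule DERIV_chain2[OF DERIV_ln_divide d]) (use phi_Hinv_pos s in simp)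
  then show ?thesis using phi_Hinv_pos[of s] s by simp
qed

lemma continuous_on_ln_phi_Hinv:
  assumes "0 \<le> a" shows "continuous_on {a..b} (\<lambda>s. ln (\<phi> (Hinv s)))"
proof (rule continuous_on_ln)
  show "continuous_on {a..b} (\<lambda>s. \<phi> (Hinv s))"
    by (rule continuous_on_compose2[OF continuous_on_phi continuous_on_Hinv[OF assms]])
      (use Hinv_ge_1 assms in auto)
  show "\<forall>s\<in>{a..b}. \<phi> (Hinv s) \<noteq> 0"
  proof
    fix s assume "s \<in> {a..b}"
    then show "\<phi> (Hinv s) \<noteq> 0" using phi_Hinv_pos[of s] assms by simp
  qed
qed

lemma ln_phi_Hinv_increment_antimono:
  assumes s1: "0 \<le> s1" and s12: "s1 \<le> s2" and t: "0 \<le> t"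
  shows "ln (\<phi> (Hinv (s2 + t))) - ln (\<phi> (Hinv s2)) \<le> ln (\<phi> (Hinv (s1 + t))) - ln (\<phi> (Hinv s1))"
proof -
  define \<psi> where "\<psi> = (\<lambda>s. ln (\<phi> (Hinv s)))"
  have \<psi>_deriv: "(\<psi> has_real_derivative deriv \<phi> (Hinv s)) (at s)" if "0 < s" for s
    unfolding \<psi>_def using ln_phi_Hinv_has_derivative[OF that] .
  have \<psi>_cont: "continuous_on {a..b} \<psi>" if "0 \<le> a" for a b
    unfolding \<psi>_def using continuous_on_ln_phi_Hinv[OF that] .
  have "(\<lambda>s. \<psi> (s + t) - \<psi> s) s2 \<le> (\<lambda>s. \<psi> (s + t) - \<psi> s) s1"
  proof (rule DERIV_nonpos_imp_decreasing_open[OF s12])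
    fix x assume x: "s1 < x" "x < s2"
    then have x0: "0 < x" using s1 by simp
    have "((\<lambda>s. \<psi> (s + t)) has_real_derivative deriv \<phi> (Hinv (x + t))) (at x)"
      using DERIV_shift[of \<psi> "deriv \<phi> (Hinv (x + t))" x t] \<psi>_deriv[of "x + t"] x0 t by simp
    then have "((\<lambda>s. \<psi> (s + t) - \<psi> s) has_real_derivative
        deriv \<phi> (Hinv (x + t)) - deriv \<phi> (Hinv x)) (at x)"
      by (intro DERIV_diff \<psi>_deriv x0)
    moreover have "deriv \<phi> (Hinv (x + t)) \<le> deriv \<phi> (Hinv x)"
      by (rule deriv_phi_antimono) (use Hinv_gt_1[OF x0] Hinv_mono[of x "x + t"] x0 t in auto)
    ultimately show "\<exists>y. ((\<lambda>s. \<psi> (s + t) - \<psi> s) has_real_derivative y) (at x) \<and> y \<le> 0"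
      by (intro exI conjI) auto
  next
    have "continuous_on {s1..s2} (\<lambda>s. \<psi> (s + t))"
      by (rule continuous_on_compose2[OF \<psi>_cont[of s1 "s2 + t"]])
        (use s1 t in \<open>auto intro!: continuous_intros\<close>)
    then show "continuous_on {s1..s2} (\<lambda>s. \<psi> (s + t) - \<psi> s)"
      by (intro continuous_intros \<psi>_cont s1)
  qed
  then show ?thesis unfolding \<psi>_def by simp
qed

lemma phi_Hinv_shift_ratio:
  assumes "0 \<le> s1" "s1 \<le> s2" "0 \<le> t"
  shows "\<phi> (Hinv (s2 + t)) * \<phi> (Hinv s1) \<le> \<phi> (Hinv (s1 + t)) * \<phi> (Hinv s2)"
proof -
  have pos: "0 < \<phi> (Hinv (s2 + t))" "0 < \<phi> (Hinv s1)" "0 < \<phi> (Hinv (s1 + t))" "0 < \<phi> (Hinv s2)"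
    using phi_Hinv_pos assms by auto
  have "ln (\<phi> (Hinv (s2 + t)) * \<phi> (Hinv s1)) \<le> ln (\<phi> (Hinv (s1 + t)) * \<phi> (Hinv s2))"
    using ln_phi_Hinv_increment_antimono[OF assms] pos by (simp add: ln_mult)
  then show ?thesis using pos by simp
qed

lemma phi_Hinv_le_increment:
  assumes s: "0 \<le> s" shows "\<phi> (Hinv s) \<le> Hinv (s + 1) - Hinv s"
proof -
  have "(\<lambda>u. Hinv u - u * \<phi> (Hinv s)) s \<le> (\<lambda>u. Hinv u - u * \<phi> (Hinv s)) (s + 1)"
  proof (rule DERIV_nonneg_imp_increasing_open[where a = s and b = "s + 1"])
    fix x assume x: "s < x" "x < s + 1"
    have "((\<lambda>u. Hinv u - u * \<phi> (Hinv s)) has_real_derivative \<phi> (Hinv x) - 1 * \<phi> (Hinv s)) (at x)"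
      using x s by (intro DERIV_diff Hinv_has_derivative DERIV_cmult_right DERIV_ident) auto
    moreover have "\<phi> (Hinv s) \<le> \<phi> (Hinv x)"
      using Hinv_ge_1[OF s] Hinv_mono[of s x] x s by (intro phi_mono) auto
    ultimately show "\<exists>y. ((\<lambda>u. Hinv u - u * \<phi> (Hinv s)) has_real_derivative y) (at x) \<and> 0 \<le> y"
      by (intro exI conjI) auto
  qed (auto intro!: continuous_intros continuous_on_Hinv s)
  then show ?thesis by (simp add: algebra_simps)
qed

lemma Hinv_H_shift_has_derivative:
  assumes u: "1 < u" and t: "0 \<le> t"
  shows "((\<lambda>u. Hinv (H u + t)) has_real_derivative \<phi> (Hinv (H u + t)) / \<phi> u) (at u)"
proof -
  have "0 < H u + t" using H_pos[OF u] t by simp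
  moreover have "((\<lambda>u. H u + t) has_real_derivative 1 / \<phi> u) (at u)"
    using DERIV_add[OF H_has_derivative[OF u] DERIV_const[of t]] by simp
  ultimately have "((\<lambda>u. Hinv (H u + t)) has_real_derivative \<phi> (Hinv (H u + t)) * (1 / \<phi> u)) (at u)"
    by (rule DERIV_chain2[where f = Hinv and g = "\<lambda>u. H u + t", OF Hinv_has_derivative])
  then show ?thesis by simp
qed

lemma Hinv_H_shift_slope_antimono:
  assumes u1: "1 \<le> u1" and u12: "u1 \<le> u2" and t: "0 \<le> t"
  shows "\<phi> (Hinv (H u2 + t)) / \<phi> u2 \<le> \<phi> (Hinv (H u1 + t)) / \<phi> u1"
proof -
  have "\<phi> (Hinv (H u2 + t)) * \<phi> (Hinv (H u1)) \<le> \<phi> (Hinv (H u1 + t)) * \<phi> (Hinv (H u2))"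
    by (rule phi_Hinv_shift_ratio) (use H_nonneg H_mono u1 u12 t in auto)
  then have "\<phi> (Hinv (H u2 + t)) * \<phi> u1 \<le> \<phi> (Hinv (H u1 + t)) * \<phi> u2"
    using Hinv_H u1 u12 by simp
  then show ?thesis
    using phi_pos[of u1] phi_pos[of u2] u1 u12 by (simp add: divide_simps mult.commute)
qed

lemma continuous_on_Hinv_H_shift:
  assumes "1 \<le> a" "0 \<le> t" shows "continuous_on {a..b} (\<lambda>u. Hinv (H u + t))"
proof (rule continuous_on_compose2[OF continuous_on_Hinv[of 0 "H b + t"]])
  show "continuous_on {a..b} (\<lambda>u. H u + t)" by (intro continuous_intros continuous_on_H assms)
  show "(\<lambda>u. H u + t) ` {a..b} \<subseteq> {0..H b + t}"
    using H_nonneg H_mono assms by force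
qed simp

lemma Hinv_H_shift_le_tangent:
  assumes p: "1 \<le> p" and v: "1 \<le> v" and t: "0 \<le> t"
  shows "Hinv (H v + t) \<le> Hinv (H p + t) + \<phi> (Hinv (H p + t)) / \<phi> p * (v - p)"
proof -
  define Z where "Z u = \<phi> (Hinv (H u + t)) / \<phi> u" for u
  define g where "g u = Hinv (H u + t) - Z p * u" for u
  have g_deriv: "(g has_real_derivative Z x - Z p * 1) (at x)" if "1 < x" for x
    unfolding g_def Z_def using that t
    by (intro DERIV_diff Hinv_H_shift_has_derivative DERIV_cmult DERIV_ident) auto
  have "g v \<le> g p"
  proof (cases "p \<le> v")
    case True
    show ?thesis
    proof (rule DERIV_nonpos_imp_decreasing_open[OF True])
      fix x assume x: "p < x" "x < v"
      then show "\<exists>y. (g has_real_derivative y) (at x) \<and> y \<le> 0"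
        using g_deriv[of x] Hinv_H_shift_slope_antimono[of p x t] p t unfolding Z_def by auto
    qed (unfold g_def, intro continuous_intros continuous_on_Hinv_H_shift p t)
  next
    case False
    then have "v \<le> p" by simp
    then show ?thesis
    proof (rule DERIV_nonneg_imp_increasing_open)
      fix x assume x: "v < x" "x < p"
      then show "\<exists>y. (g has_real_derivative y) (at x) \<and> 0 \<le> y"
        using g_deriv[of x] Hinv_H_shift_slope_antimono[of x p t] v t unfolding Z_def by auto
    qed (unfold g_def, intro continuous_intros continuous_on_Hinv_H_shift v t)
  qed
  then have "Hinv (H v + t) \<le> Hinv (H p + t) + Z p * (v - p)"
    unfolding g_def by (simp add: algebra_simps)
  then show ?thesis unfolding Z_def .
qed

lemma r_phi_eq: "r_phi \<phi> k = \<phi> (Hinv (real k)) / \<phi> 1"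
  unfolding r_phi_def by simp

lemma r_phi_0: "r_phi \<phi> 0 = 1"
  using phi_pos[of 1] by (simp add: r_phi_eq)

lemma r_phi_nonneg: "0 \<le> r_phi \<phi> k"
  using phi_Hinv_pos[of k] phi_pos[of 1] by (simp add: r_phi_eq)

lemma r_phi_Suc_le: "r_phi \<phi> (Suc n) \<le> r_phi \<phi> 1 / \<phi> 1 * (Hinv (real n + 1) - Hinv (real n))"
proof -
  have "\<phi> (Hinv (real n + 1)) * \<phi> (Hinv 0) \<le> \<phi> (Hinv (0 + 1)) * \<phi> (Hinv (real n))"
    by (rule phi_Hinv_shift_ratio) auto
  then have "r_phi \<phi> (Suc n) \<le> r_phi \<phi> 1 / \<phi> 1 * \<phi> (Hinv (real n))"
    using phi_pos[of 1] by (simp add: r_phi_eq divide_simps mult.commute add.commute)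
  also have "\<dots> \<le> r_phi \<phi> 1 / \<phi> 1 * (Hinv (real n + 1) - Hinv (real n))"
    using phi_Hinv_le_increment[of n] r_phi_nonneg[of 1] phi_pos[of 1] by (intro mult_left_mono) auto
  finally show ?thesis .
qed

lemma r_phi_drift_step:
  assumes w: "1 \<le> w" and p: "1 \<le> w - \<phi> w"
  shows "r_phi \<phi> (Suc n) + r_phi \<phi> 1 / \<phi> 1 * (Hinv (H (w - \<phi> w) + (real n + 1)) - Hinv (real n + 1))
     \<le> r_phi \<phi> 1 / \<phi> 1 * (Hinv (H w + real n) - Hinv (real n))"
proof -
  define c where "c = r_phi \<phi> 1 / \<phi> 1"
  have c: "0 \<le> c" unfolding c_def using r_phi_nonneg[of 1] phi_pos[of 1] by simp
  have "(w - (w - \<phi> w)) / \<phi> w \<le> H w - H (w - \<phi> w)"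
    by (rule H_diff_ge[OF p]) (use phi_pos[OF w] in simp)
  then have "1 \<le> H w - H (w - \<phi> w)" using phi_pos[OF w] by simp
  then have "Hinv (H (w - \<phi> w) + (real n + 1)) \<le> Hinv (H w + real n)"
    using H_nonneg[OF p] by (intro Hinv_mono) auto
  then have "c * (Hinv (H (w - \<phi> w) + (real n + 1)) - Hinv (real n + 1))
      \<le> c * (Hinv (H w + real n) - Hinv (real n + 1))"
    by (intro mult_left_mono c) simp
  moreover have "r_phi \<phi> (Suc n) \<le> c * (Hinv (real n + 1) - Hinv (real n))"
    unfolding c_def by (rule r_phi_Suc_le)
  ultimately show ?thesis unfolding c_def[symmetric] by (simp add: algebra_simps)
qed

end

section \<open>The residual kernel\<close>

lemma nn_integral_measure_add:
  assumes sets_L: "sets L = sets M" and sets_N1: "sets N1 = sets M" and sets_N2: "sets N2 = sets M"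
    and add: "\<And>A. A \<in> sets M \<Longrightarrow> emeasure L A = emeasure N1 A + emeasure N2 A"
    and f: "f \<in> borel_measurable M"
  shows "(\<integral>\<^sup>+y. f y \<partial>L) = (\<integral>\<^sup>+y. f y \<partial>N1) + (\<integral>\<^sup>+y. f y \<partial>N2)"
  using f
proof induction
  case (cong f g)
  have "space L = space M" "space N1 = space M" "space N2 = space M"
    using sets_eq_imp_space_eq sets_L sets_N1 sets_N2 by blast+
  then have "(\<integral>\<^sup>+y. f y \<partial>L) = (\<integral>\<^sup>+y. g y \<partial>L)" "(\<integral>\<^sup>+y. f y \<partial>N1) = (\<integral>\<^sup>+y. g y \<partial>N1)"
    "(\<integral>\<^sup>+y. f y \<partial>N2) = (\<integral>\<^sup>+y. g y \<partial>N2)"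
    using cong(3) by (auto intro!: nn_integral_cong)
  then show ?case using cong(4) by simp
next
  case (set A)
  then show ?case using add[OF set] sets_L sets_N1 sets_N2 by (simp add: nn_integral_indicator)
next
  case (mult u c)
  have "u \<in> borel_measurable L" "u \<in> borel_measurable N1" "u \<in> borel_measurable N2"
    using mult(2) sets_L sets_N1 sets_N2 by (auto cong: measurable_cong_sets)
  then show ?case using mult(4) by (simp add: nn_integral_cmult distrib_left)
next
  case (add u v)
  have "u \<in> borel_measurable L" "u \<in> borel_measurable N1" "u \<in> borel_measurable N2"
    "v \<in> borel_measurable L" "v \<in> borel_measurable N1" "v \<in> borel_measurable N2"
    using add(1,3) sets_L sets_N1 sets_N2 by (auto cong: measurable_cong_sets)
  then show ?case using add(6,7) by (simp add: nn_integral_add ac_simps)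
next
  case (seq U)
  have "U i \<in> borel_measurable L" "U i \<in> borel_measurable N1" "U i \<in> borel_measurable N2" for i
    using seq(1) sets_L sets_N1 sets_N2 by (auto cong: measurable_cong_sets)
  then have "(\<integral>\<^sup>+y. (SUP i. U i y) \<partial>L) = (SUP i. (\<integral>\<^sup>+y. U i y \<partial>N1) + (\<integral>\<^sup>+y. U i y \<partial>N2))"
    using seq(3,5) by (simp add: nn_integral_monotone_convergence_SUP)
  also have "\<dots> = (SUP i. \<integral>\<^sup>+y. U i y \<partial>N1) + (SUP i. \<integral>\<^sup>+y. U i y \<partial>N2)"
    by (intro ennreal_SUP_add incseq_nn_integral seq(3))
  also have "\<dots> = (\<integral>\<^sup>+y. (SUP i. U i y) \<partial>N1) + (\<integral>\<^sup>+y. (SUP i. U i y) \<partial>N2)"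
    using seq(3) \<open>\<And>i. U i \<in> borel_measurable N1\<close> \<open>\<And>i. U i \<in> borel_measurable N2\<close>
    by (simp add: nn_integral_monotone_convergence_SUP)
  finally show ?case by (simp add: SUP_apply image_comp)
qed

lemma prob_space_eq_if_minorized:
  assumes "prob_space \<mu>" "prob_space \<nu>" and sets_eq: "sets \<mu> = sets \<nu>"
    and le: "\<And>A. A \<in> sets \<nu> \<Longrightarrow> measure \<nu> A \<le> measure \<mu> A"
  shows "\<mu> = \<nu>"
proof (rule measure_eqI[OF sets_eq])
  interpret \<mu>: prob_space \<mu> by fact
  interpret \<nu>: prob_space \<nu> by fact
  fix A assume A: "A \<in> sets \<mu>"
  have "measure \<nu> (space \<nu> - A) \<le> measure \<mu> (space \<mu> - A)"
    using le[of "space \<nu> - A"] A sets_eq sets_eq_imp_space_eq[OF sets_eq] by auto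
  then have "measure \<mu> A \<le> measure \<nu> A"
    using A sets_eq by (simp add: \<mu>.prob_compl \<nu>.prob_compl)
  then show "emeasure \<mu> A = emeasure \<nu> A"
    using le[of A] A sets_eq by (simp add: \<mu>.emeasure_eq_measure \<nu>.emeasure_eq_measure)
qed

context
  fixes M :: "'a measure" and P :: "'a \<Rightarrow> 'a measure" and \<nu> :: "'a measure" and \<epsilon> :: real and x :: 'a
  assumes prob_P: "prob_space (P x)" and sets_P: "sets (P x) = sets M"
    and prob_nu: "prob_space \<nu>" and sets_nu: "sets \<nu> = sets M"
    and eps: "0 < \<epsilon>" "\<epsilon> < 1"
    and minor: "\<forall>A\<in>sets M. \<epsilon> * measure \<nu> A \<le> measure (P x) A"
begin

private abbreviation "D \<equiv> diff_measure (P x) (scale_measure (ennreal \<epsilon>) \<nu>)"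

private lemma sets_D: "sets D = sets M" and space_D: "space D = space M"
  using sets_P sets_eq_imp_space_eq by auto

private lemma emeasure_minorant_le:
  assumes "A \<in> sets M" shows "ennreal \<epsilon> * emeasure \<nu> A \<le> emeasure (P x) A"
proof -
  interpret P: prob_space "P x" by (rule prob_P)
  interpret nu: prob_space \<nu> by (rule prob_nu)
  have "ennreal \<epsilon> * emeasure \<nu> A = ennreal (\<epsilon> * measure \<nu> A)"
    using eps by (simp add: nu.emeasure_eq_measure ennreal_mult)
  also have "\<dots> \<le> emeasure (P x) A"
    using minor assms by (simp add: P.emeasure_eq_measure)
  finally show ?thesis .
qed

private lemma emeasure_D:
  assumes "A \<in> sets M" shows "emeasure D A = emeasure (P x) A - ennreal \<epsilon> * emeasure \<nu> A"
proof -
  interpret P: prob_space "P x" by (rule prob_P)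
  have "finite_measure (scale_measure (ennreal \<epsilon>) \<nu>)"
    using prob_nu by (intro finite_measureI)
      (simp add: space_scale_measure ennreal_mult_eq_top_iff prob_space.emeasure_space_1)
  then show ?thesis
    using emeasure_minorant_le assms sets_P sets_nu
    by (subst emeasure_diff_measure) (auto simp: P.finite_measure_axioms)
qed

lemma residual_kernel_eq_scale_diff:
  "residual_kernel M P \<nu> \<epsilon> x = scale_measure (ennreal (1 / (1 - \<epsilon>))) D"
proof -
  have "residual_kernel M P \<nu> \<epsilon> x = measure_of (space M) (sets M)
      (\<lambda>A. (emeasure (P x) A - ennreal \<epsilon> * emeasure \<nu> A) / ennreal (1 - \<epsilon>))"
    unfolding residual_kernel_def using eps by simp
  also have "\<dots> = measure_of (space M) (sets M) (\<lambda>A. ennreal (1 / (1 - \<epsilon>)) * emeasure D A)"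
  proof (rule measure_of_eq[OF sets.space_closed])
    fix A assume "A \<in> sigma_sets (space M) (sets M)"
    then have "A \<in> sets M" by (simp add: sets.sigma_sets_eq)
    then show "(emeasure (P x) A - ennreal \<epsilon> * emeasure \<nu> A) / ennreal (1 - \<epsilon>)
        = ennreal (1 / (1 - \<epsilon>)) * emeasure D A"
      using eps by (simp add: emeasure_D divide_ennreal_def inverse_ennreal inverse_eq_divide mult.commute)
  qed
  also have "\<dots> = scale_measure (ennreal (1 / (1 - \<epsilon>))) D"
    unfolding scale_measure_def using sets_D space_D by simp
  finally show ?thesis .
qed

lemma sets_residual_kernel: "sets (residual_kernel M P \<nu> \<epsilon> x) = sets M"
  using sets_D by (simp add: residual_kernel_eq_scale_diff)

lemma prob_space_residual_kernel: "prob_space (residual_kernel M P \<nu> \<epsilon> x)"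
proof (rule prob_spaceI)
  have "emeasure (P x) (space M) = 1" "emeasure \<nu> (space M) = 1"
    using prob_space.emeasure_space_1[OF prob_P] prob_space.emeasure_space_1[OF prob_nu]
      sets_eq_imp_space_eq[OF sets_P] sets_eq_imp_space_eq[OF sets_nu] by auto
  then have "emeasure D (space M) = ennreal (1 - \<epsilon>)"
    using eps ennreal_minus[of \<epsilon> 1] by (simp add: emeasure_D)
  then show "emeasure (residual_kernel M P \<nu> \<epsilon> x) (space (residual_kernel M P \<nu> \<epsilon> x)) = 1"
    using eps space_D by (simp add: residual_kernel_eq_scale_diff space_scale_measure ennreal_mult[symmetric])
qed

lemma nn_integral_minorized_split:
  assumes f: "f \<in> borel_measurable M"
  shows "(\<integral>\<^sup>+y. f y \<partial>P x)
    = ennreal (1 - \<epsilon>) * (\<integral>\<^sup>+y. f y \<partial>residual_kernel M P \<nu> \<epsilon> x) + ennreal \<epsilon> * (\<integral>\<^sup>+y. f y \<partial>\<nu>)"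
proof -
  have f_D: "f \<in> borel_measurable D" and f_nu: "f \<in> borel_measurable \<nu>"
    using f sets_D sets_nu by (auto cong: measurable_cong_sets)
  have "(\<integral>\<^sup>+y. f y \<partial>P x) = (\<integral>\<^sup>+y. f y \<partial>D) + (\<integral>\<^sup>+y. f y \<partial>scale_measure (ennreal \<epsilon>) \<nu>)"
  proof (rule nn_integral_measure_add[OF sets_P sets_D _ _ f])
    fix A assume "A \<in> sets M"
    then show "emeasure (P x) A = emeasure D A + emeasure (scale_measure (ennreal \<epsilon>) \<nu>) A"
      using emeasure_minorant_le by (simp add: emeasure_D diff_add_cancel_ennreal)
  qed (use sets_nu in simp)
  moreover have "(\<integral>\<^sup>+y. f y \<partial>D) = ennreal (1 - \<epsilon>) * (\<integral>\<^sup>+y. f y \<partial>residual_kernel M P \<nu> \<epsilon> x)"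
    using eps f_D
    by (simp add: residual_kernel_eq_scale_diff nn_integral_scale_measure ennreal_mult[symmetric]
        mult.assoc[symmetric])
  ultimately show ?thesis using f_nu by (simp add: nn_integral_scale_measure)
qed

lemma nn_integral_residual_kernel_le:
  assumes f: "f \<in> borel_measurable M" and "0 \<le> S" and le: "(\<integral>\<^sup>+y. f y \<partial>P x) \<le> ennreal S"
  shows "(\<integral>\<^sup>+y. f y \<partial>residual_kernel M P \<nu> \<epsilon> x) \<le> ennreal ((S - \<epsilon> * enn2real (\<integral>\<^sup>+y. f y \<partial>\<nu>)) / (1 - \<epsilon>))"
proof -
  define A where "A = (\<integral>\<^sup>+y. f y \<partial>residual_kernel M P \<nu> \<epsilon> x)"
  define B where "B = (\<integral>\<^sup>+y. f y \<partial>\<nu>)"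
  have split: "ennreal (1 - \<epsilon>) * A + ennreal \<epsilon> * B \<le> ennreal S"
    using le nn_integral_minorized_split[OF f] unfolding A_def B_def by simp
  have "ennreal (1 - \<epsilon>) * A \<le> ennreal S" "ennreal \<epsilon> * B \<le> ennreal S"
    using split by (auto elim!: order_trans[rotated] intro: add_increasing add_increasing2)
  then have "ennreal (1 - \<epsilon>) * A < \<infinity>" "ennreal \<epsilon> * B < \<infinity>"
    by (auto intro: le_less_trans[OF _ ennreal_less_top])
  then have A: "A = ennreal (enn2real A)" and B: "B = ennreal (enn2real B)"
    using eps by (auto simp: ennreal_mult_less_top less_top)
  have "ennreal ((1 - \<epsilon>) * enn2real A + \<epsilon> * enn2real B) \<le> ennreal S"
    using split eps by (subst (asm) A, subst (asm) B) (simp add: ennreal_mult ennreal_plus)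
  then have "(1 - \<epsilon>) * enn2real A + \<epsilon> * enn2real B \<le> S"
    using \<open>0 \<le> S\<close> by (simp add: ennreal_le_iff)
  then have "enn2real A \<le> (S - \<epsilon> * enn2real B) / (1 - \<epsilon>)"
    using eps by (simp add: field_simps)
  then show ?thesis unfolding B_def[symmetric] by (subst A_def[symmetric], subst A) (rule ennreal_leI)
qed

end

section \<open>Drift bounds\<close>

lemma borel_measurable_mono_on_comp:
  fixes g :: "real \<Rightarrow> real"
  assumes "mono_on {a..} g" "W \<in> borel_measurable M" "\<And>x. a \<le> W x"
  shows "(\<lambda>x. g (W x)) \<in> borel_measurable M"
proof -
  have "mono (\<lambda>v. g (max a v))"
  proof (rule monoI)
    fix u v :: real assume "u \<le> v"
    then show "g (max a u) \<le> g (max a v)" by (intro mono_onD[OF assms(1)]) auto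
  qed
  then have "(\<lambda>x. g (max a (W x))) \<in> borel_measurable M"
    by (intro measurable_compose[OF assms(2)] borel_measurable_mono)
  then show ?thesis using assms(3) by (simp add: max_absorb2)
qed

lemma nn_integral_affine_le:
  assumes "prob_space N" and W: "W \<in> borel_measurable N" "\<And>y. 0 \<le> W y"
    and W_int: "(\<integral>\<^sup>+y. ennreal (W y) \<partial>N) \<le> ennreal q" and "0 \<le> q"
    and "0 \<le> b" and nonneg: "\<And>y. 0 \<le> a + b * W y"
  shows "(\<integral>\<^sup>+y. ennreal (a + b * W y) \<partial>N) \<le> ennreal (a + b * q)"
proof -
  interpret prob_space N by fact
  have int_W: "integrable N W"
    using W W_int by (intro integrableI_nonneg) (auto simp: top_unique intro: le_less_trans)
  have "integral\<^sup>L N W = enn2real (\<integral>\<^sup>+y. ennreal (W y) \<partial>N)"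
    using W by (intro integral_eq_nn_integral) auto
  also have "\<dots> \<le> q"
    using enn2real_mono[OF W_int] \<open>0 \<le> q\<close> by simp
  finally have "integral\<^sup>L N W \<le> q" .
  have "(\<integral>\<^sup>+y. ennreal (a + b * W y) \<partial>N) = ennreal (integral\<^sup>L N (\<lambda>y. a + b * W y))"
    using int_W nonneg by (intro nn_integral_eq_integral) auto
  moreover have "integral\<^sup>L N (\<lambda>y. a + b * W y) = a + b * integral\<^sup>L N W"
    using int_W by (simp add: prob_space)
  ultimately show ?thesis
    using \<open>integral\<^sup>L N W \<le> q\<close> \<open>0 \<le> b\<close> by (simp add: ennreal_leI mult_left_mono)
qed

locale subgeometric_drift = concave_rate \<phi> for \<phi> +
  fixes M :: "'a measure" and P :: "'a \<Rightarrow> 'a measure" and C :: "'a set"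
    and \<nu> :: "'a measure" and \<epsilon> :: real and W :: "'a \<Rightarrow> real"
  assumes space_M: "space M = UNIV"
    and sets_C: "C \<in> sets M"
    and kernel: "P \<in> M \<rightarrow>\<^sub>M prob_algebra M"
    and eps_pos: "0 < \<epsilon>"
    and nu_prob: "\<nu> \<in> space (prob_algebra M)"
    and minor: "\<forall>x\<in>C. \<forall>A\<in>sets M. \<epsilon> * measure \<nu> A \<le> measure (P x) A"
    and W_meas[measurable]: "W \<in> borel_measurable M"
    and W_ge_1: "\<And>x. 1 \<le> W x"
    and drift: "\<And>x. x \<notin> C \<Longrightarrow> (\<integral>\<^sup>+y. ennreal (W y) \<partial>P x) \<le> ennreal (W x - \<phi> (W x))"
    and sup_PW_finite: "(SUP x\<in>C. \<integral>\<^sup>+y. ennreal (W y) \<partial>P x) < \<infinity>"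
begin

abbreviation "U0 \<equiv> exp_sum_to_hit M P C (\<lambda>k y. ennreal (r_phi \<phi> k))"
abbreviation "V0 \<equiv> exp_sum_to_hit M P C (\<lambda>k y. ennreal (\<phi> (W y)))"
abbreviation "Q \<equiv> residual_kernel M P \<nu> \<epsilon>"

lemma prob_space_P: "prob_space (P x)" and sets_P: "sets (P x) = sets M"
  using measurable_space[OF kernel] by (auto simp: space_prob_algebra space_M)

lemma prob_space_nu: "prob_space \<nu>" and sets_nu: "sets \<nu> = sets M"
  using nu_prob by (auto simp: space_prob_algebra)

lemma measurable_P: "f \<in> borel_measurable M \<Longrightarrow> f \<in> borel_measurable (P x)"
  using sets_P by (simp cong: measurable_cong_sets)

lemma phi_W_measurable[measurable]: "(\<lambda>y. \<phi> (W y)) \<in> borel_measurable M"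
  using phi_mono W_ge_1 by (intro borel_measurable_mono_on_comp[OF _ W_meas]) (auto intro: mono_onI)

lemma W_nonneg: "0 \<le> W x"
  using W_ge_1[of x] by simp

lemma emeasure_space_P[simp]: "emeasure (P x) (space (P x)) = 1"
  using prob_space.emeasure_space_1[OF prob_space_P] .

lemma drift_ge_1:
  assumes "x \<notin> C" shows "1 \<le> W x - \<phi> (W x)"
proof -
  have "ennreal 1 = (\<integral>\<^sup>+y. 1 \<partial>P x)" by simp
  also have "\<dots> \<le> (\<integral>\<^sup>+y. ennreal (W y) \<partial>P x)" by (intro nn_integral_mono) (simp add: W_ge_1)
  also have "\<dots> \<le> ennreal (W x - \<phi> (W x))" using drift[OF assms] .
  finally show ?thesis by (cases "0 \<le> W x - \<phi> (W x)") (auto simp: ennreal_neg)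
qed

definition U_drift :: "nat \<Rightarrow> 'a \<Rightarrow> real" where
  "U_drift n y = r_phi \<phi> 1 / \<phi> 1 * (Hinv (H (W y) + real n) - Hinv (real n))"

lemma rate_slope_nonneg: "0 \<le> r_phi \<phi> 1 / \<phi> 1"
  using r_phi_nonneg[of 1] phi_pos[of 1] by simp

lemma U_drift_nonneg: "0 \<le> U_drift n y"
  unfolding U_drift_def using rate_slope_nonneg H_nonneg[OF W_ge_1]
  by (intro mult_nonneg_nonneg) (auto intro!: Hinv_mono)

lemma U_drift_0: "U_drift 0 y = r_phi \<phi> 1 / \<phi> 1 * (W y - 1)"
  unfolding U_drift_def by (simp add: Hinv_H W_ge_1)

lemma U_drift_measurable[measurable]: "U_drift n \<in> borel_measurable M"
proof -
  have "mono_on {1..} (\<lambda>v. r_phi \<phi> 1 / \<phi> 1 * (Hinv (H v + real n) - Hinv (real n)))"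
    using rate_slope_nonneg H_nonneg
    by (intro mono_onI mult_left_mono diff_right_mono Hinv_mono add_right_mono H_mono) auto
  then show ?thesis
    unfolding U_drift_def[abs_def] by (rule borel_measurable_mono_on_comp[OF _ W_meas W_ge_1])
qed

lemma U_drift_le_tangent:
  assumes "1 \<le> p"
  shows "U_drift n y \<le> r_phi \<phi> 1 / \<phi> 1 *
    (Hinv (H p + real n) - Hinv (real n) + \<phi> (Hinv (H p + real n)) / \<phi> p * (W y - p))"
proof -
  have "Hinv (H (W y) + real n) - Hinv (real n)
      \<le> Hinv (H p + real n) - Hinv (real n) + \<phi> (Hinv (H p + real n)) / \<phi> p * (W y - p)"
    using Hinv_H_shift_le_tangent[OF assms W_ge_1, of "real n"] by simp
  then show ?thesis unfolding U_drift_def by (rule mult_left_mono[OF _ rate_slope_nonneg])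
qed

lemma U_drift_step:
  assumes "y' \<notin> C"
  shows "(\<integral>\<^sup>+y. ennreal (r_phi \<phi> (Suc n)) + indicator (-C) y * ennreal (U_drift (Suc n) y) \<partial>P y')
    \<le> ennreal (U_drift n y')"
proof -
  define c where "c = r_phi \<phi> 1 / \<phi> 1"
  define p where "p = W y' - \<phi> (W y')"
  define Z where "Z = \<phi> (Hinv (H p + real (Suc n))) / \<phi> p"
  define a where "a = r_phi \<phi> (Suc n) + c * (Hinv (H p + real (Suc n)) - Hinv (real (Suc n))) - c * Z * p"
  have p: "1 \<le> p" unfolding p_def by (rule drift_ge_1[OF assms])
  have "0 \<le> Z" unfolding Z_def using phi_Hinv_pos[of "H p + Suc n"] phi_pos[OF p] H_nonneg[OF p] by simp
  then have cZ: "0 \<le> c * Z" unfolding c_def using rate_slope_nonneg by (rule mult_nonneg_nonneg[rotated])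
  have affine: "r_phi \<phi> (Suc n) + U_drift (Suc n) y \<le> a + c * Z * W y" for y
    using U_drift_le_tangent[OF p, of "Suc n" y, folded c_def Z_def] unfolding a_def
    by (simp add: algebra_simps)
  have affine_nonneg: "0 \<le> a + c * Z * W y" for y
    using affine[of y] r_phi_nonneg[of "Suc n"] U_drift_nonneg[of "Suc n" y] by linarith
  have pointwise: "ennreal (r_phi \<phi> (Suc n)) + indicator (-C) y * ennreal (U_drift (Suc n) y)
      \<le> ennreal (a + c * Z * W y)" for y
  proof -
    have "indicator (-C) y * ennreal (U_drift (Suc n) y) \<le> ennreal (U_drift (Suc n) y)"
      by (simp add: indicator_def)
    then show ?thesis
      using affine[of y] r_phi_nonneg U_drift_nonneg by (metis add_left_mono ennreal_leI ennreal_plus order_trans)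
  qed
  have "(\<integral>\<^sup>+y. ennreal (r_phi \<phi> (Suc n)) + indicator (-C) y * ennreal (U_drift (Suc n) y) \<partial>P y')
      \<le> (\<integral>\<^sup>+y. ennreal (a + c * Z * W y) \<partial>P y')"
    by (intro nn_integral_mono pointwise)
  also have "\<dots> \<le> ennreal (a + c * Z * p)"
    using drift[OF assms] p cZ W_nonneg affine_nonneg unfolding p_def
    by (intro nn_integral_affine_le prob_space_P measurable_P W_meas) auto
  also have "a + c * Z * p = r_phi \<phi> (Suc n) + c * (Hinv (H p + real (Suc n)) - Hinv (real (Suc n)))"
    unfolding a_def by simp
  also have "\<dots> \<le> U_drift n y'"
    using r_phi_drift_step[OF W_ge_1 drift_ge_1[OF assms], of n]
    unfolding U_drift_def c_def p_def by (simp add: add.commute)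
  finally show ?thesis by (simp add: ennreal_leI)
qed

lemma U0_le: "U0 x \<le> ennreal (1 + r_phi \<phi> 1 / \<phi> 1 * (W x - 1) * indicator (- C) x)"
proof -
  have "U0 x \<le> ennreal (r_phi \<phi> 0) + indicator (-C) x * ennreal (U_drift 0 x)"
    using sets_C by (intro exp_sum_to_hit_le_drift[OF space_M kernel] U_drift_step) auto
  also have "\<dots> = ennreal (1 + r_phi \<phi> 1 / \<phi> 1 * (W x - 1) * indicator (- C) x)"
    using U_drift_nonneg[of 0 x] by (simp add: r_phi_0 U_drift_0 indicator_def ennreal_plus)
  finally show ?thesis .
qed

lemma V0_le: "V0 x \<le> (SUP y\<in>C. ennreal (\<phi> (W y))) + ennreal (W x * indicator (- C) x)"
proof -
  define s where "s = (SUP y\<in>C. ennreal (\<phi> (W y)))"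
  define \<Phi> where "\<Phi> y = ennreal (W y - \<phi> (W y)) + s" for y
  have pointwise: "ennreal (\<phi> (W y)) + indicator (-C) y * \<Phi> y \<le> s + ennreal (W y * indicator (- C) y)" for y
  proof (cases "y \<in> C")
    case True
    then have "ennreal (\<phi> (W y)) \<le> s" unfolding s_def by (rule SUP_upper)
    then show ?thesis using True by simp
  next
    case False
    then have "ennreal (\<phi> (W y)) + ennreal (W y - \<phi> (W y)) = ennreal (W y)"
      using phi_pos[OF W_ge_1, of y] drift_ge_1[OF False] by (simp flip: ennreal_plus)
    then show ?thesis using False unfolding \<Phi>_def by (simp add: ac_simps)
  qed
  have step: "(\<integral>\<^sup>+y. ennreal (\<phi> (W y)) + indicator (-C) y * \<Phi> y \<partial>P y') \<le> \<Phi> y'" if "y' \<notin> C" for y'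
  proof -
    have "(\<integral>\<^sup>+y. ennreal (\<phi> (W y)) + indicator (-C) y * \<Phi> y \<partial>P y') \<le> (\<integral>\<^sup>+y. s + ennreal (W y) \<partial>P y')"
      using pointwise W_nonneg
      by (intro nn_integral_mono) (metis add_left_mono ennreal_leI indicator_le_1 mult_left_le order_trans)
    also have "\<dots> = s + (\<integral>\<^sup>+y. ennreal (W y) \<partial>P y')"
      by (subst nn_integral_add) (auto intro: measurable_P)
    also have "\<dots> \<le> \<Phi> y'"
      unfolding \<Phi>_def using drift[OF that] by (simp add: add_left_mono ac_simps)
    finally show ?thesis .
  qed
  have "V0 x \<le> ennreal (\<phi> (W x)) + indicator (-C) x * \<Phi> x"
    using sets_C step unfolding \<Phi>_def by (intro exp_sum_to_hit_le_drift[OF space_M kernel]) auto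
  also have "\<dots> \<le> s + ennreal (W x * indicator (- C) x)" by (rule pointwise)
  finally show ?thesis unfolding s_def .
qed

text \<open>Unlike V0_le, this bound stays finite when phi o W is unbounded on C.\<close>
lemma V0_le_linear: "\<exists>K\<ge>0. \<forall>x. V0 x \<le> ennreal (K * W x)"
proof -
  obtain K where K: "0 < K" "\<And>v. 1 \<le> v \<Longrightarrow> \<phi> v \<le> K * v" using phi_le_linear by auto
  define \<Phi> where "\<Phi> y = ennreal ((K + 1) * W y - \<phi> (W y))" for y
  have pointwise: "ennreal (\<phi> (W y)) + indicator (-C) y * \<Phi> y \<le> ennreal ((K + 1) * W y)" for y
  proof -
    have "\<phi> (W y) \<le> (K + 1) * W y" using K(2)[OF W_ge_1[of y]] W_ge_1[of y] by (simp add: algebra_simps)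
    then show ?thesis
      unfolding \<Phi>_def using phi_pos[OF W_ge_1, of y]
      by (cases "y \<in> C") (simp_all add: ennreal_leI flip: ennreal_plus)
  qed
  have step: "(\<integral>\<^sup>+y. ennreal (\<phi> (W y)) + indicator (-C) y * \<Phi> y \<partial>P y') \<le> \<Phi> y'" if "y' \<notin> C" for y'
  proof -
    have "(\<integral>\<^sup>+y. ennreal (\<phi> (W y)) + indicator (-C) y * \<Phi> y \<partial>P y') \<le> (\<integral>\<^sup>+y. ennreal (0 + (K + 1) * W y) \<partial>P y')"
      using pointwise by (intro nn_integral_mono) simp
    also have "\<dots> \<le> ennreal (0 + (K + 1) * (W y' - \<phi> (W y')))"
      using drift[OF that] drift_ge_1[OF that] K W_nonneg
      by (intro nn_integral_affine_le prob_space_P measurable_P W_meas) auto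
    also have "\<dots> \<le> \<Phi> y'"
      unfolding \<Phi>_def using K phi_pos[OF W_ge_1, of y'] by (intro ennreal_leI) (simp add: algebra_simps)
    finally show ?thesis .
  qed
  have "V0 x \<le> ennreal ((K + 1) * W x)" for x
  proof -
    have "V0 x \<le> ennreal (\<phi> (W x)) + indicator (-C) x * \<Phi> x"
      using sets_C step unfolding \<Phi>_def by (intro exp_sum_to_hit_le_drift[OF space_M kernel]) auto
    also have "\<dots> \<le> ennreal ((K + 1) * W x)" by (rule pointwise)
    finally show ?thesis .
  qed
  then show ?thesis using K(1) by (intro exI[of _ "K + 1"]) auto
qed

text \<open>For \<epsilon> = 1 the residual kernel is \<nu>, and the minorization forces P x = \<nu> on C, so then
  the bound is simply the supremum of P W over C.\<close>
definition b_W :: real where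
  "b_W = (if \<epsilon> < 1
     then (enn2real (SUP x\<in>C. \<integral>\<^sup>+y. ennreal (W y) \<partial>P x) - \<epsilon> * enn2real (\<integral>\<^sup>+y. ennreal (W y) \<partial>\<nu>)) / (1 - \<epsilon>)
     else enn2real (SUP x\<in>C. \<integral>\<^sup>+y. ennreal (W y) \<partial>P x))"

lemma residual_kernel_on_C:
  assumes x: "x \<in> C"
  shows "prob_space (Q x)" "sets (Q x) = sets M" "(\<integral>\<^sup>+y. ennreal (W y) \<partial>Q x) \<le> ennreal b_W"
proof -
  define S where "S = (SUP x\<in>C. \<integral>\<^sup>+y. ennreal (W y) \<partial>P x)"
  have minor_x: "\<forall>A\<in>sets M. \<epsilon> * measure \<nu> A \<le> measure (P x) A" using minor x by blast
  have PW_le: "(\<integral>\<^sup>+y. ennreal (W y) \<partial>P x) \<le> ennreal (enn2real S)"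
    using SUP_upper[OF x, of "\<lambda>x. \<integral>\<^sup>+y. ennreal (W y) \<partial>P x"] sup_PW_finite
    unfolding S_def by (simp add: less_top[symmetric])
  have "\<epsilon> * measure \<nu> (space M) \<le> measure (P x) (space M)" using minor_x by simp
  moreover have "measure \<nu> (space M) = 1" "measure (P x) (space M) = 1"
    using prob_space.prob_space[OF prob_space_nu] prob_space.prob_space[OF prob_space_P[of x]]
      sets_eq_imp_space_eq[OF sets_nu] sets_eq_imp_space_eq[OF sets_P, of x] by auto
  ultimately have "\<epsilon> \<le> 1" by simp
  then consider "\<epsilon> < 1" | "\<epsilon> = 1" by linarith
  then have "prob_space (Q x) \<and> sets (Q x) = sets M \<and> (\<integral>\<^sup>+y. ennreal (W y) \<partial>Q x) \<le> ennreal b_W"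
  proof cases
    case 1
    note minorized = prob_space_P[of x] sets_P[of x] prob_space_nu sets_nu eps_pos 1 minor_x
    have "(\<lambda>y. ennreal (W y)) \<in> borel_measurable M" by measurable
    then show ?thesis
      using prob_space_residual_kernel[where P = P and x = x, OF minorized]
        sets_residual_kernel[where P = P and x = x, OF minorized]
        nn_integral_residual_kernel_le[where P = P and x = x, OF minorized _ enn2real_nonneg PW_le] 1
      unfolding b_W_def S_def by simp
  next
    case 2
    have "P x = \<nu>"
      using minor_x 2 prob_space_P prob_space_nu sets_P sets_nu by (intro prob_space_eq_if_minorized) auto
    then show ?thesis
      using PW_le 2 prob_space_nu sets_nu unfolding b_W_def S_def residual_kernel_def by simp
  qed
  then show "prob_space (Q x)" "sets (Q x) = sets M" "(\<integral>\<^sup>+y. ennreal (W y) \<partial>Q x) \<le> ennreal b_W"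
    by auto
qed

lemma b_W_ge_1: assumes "x \<in> C" shows "1 \<le> b_W"
proof -
  interpret prob_space "Q x" by (rule residual_kernel_on_C[OF assms])
  have "ennreal 1 = (\<integral>\<^sup>+y. 1 \<partial>Q x)" using emeasure_space_1 by simp
  also have "\<dots> \<le> (\<integral>\<^sup>+y. ennreal (W y) \<partial>Q x)" by (intro nn_integral_mono) (simp add: W_ge_1)
  also have "\<dots> \<le> ennreal b_W" by (rule residual_kernel_on_C[OF assms])
  finally show ?thesis by (cases "0 \<le> b_W") (auto simp: ennreal_neg)
qed

lemma nn_integral_residual_affine_le:
  assumes "x \<in> C" "0 \<le> b" "\<And>y. 0 \<le> a + b * W y"
  shows "(\<integral>\<^sup>+y. ennreal (a + b * W y) \<partial>Q x) \<le> ennreal (a + b * b_W)"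
  using residual_kernel_on_C[OF assms(1)] b_W_ge_1[OF assms(1)] assms(2,3) W_nonneg
  by (intro nn_integral_affine_le) (auto cong: measurable_cong_sets)

lemma SUP_residual_U0_le:
  "(SUP x\<in>C. \<integral>\<^sup>+y. U0 y \<partial>Q x) \<le> ennreal (1 + r_phi \<phi> 1 / \<phi> 1 * (b_W - 1))"
proof (rule SUP_least)
  fix x assume x: "x \<in> C"
  define c where "c = r_phi \<phi> 1 / \<phi> 1"
  have c: "0 \<le> c" unfolding c_def by (rule rate_slope_nonneg)
  have affine_nonneg: "0 \<le> (1 - c) + c * W y" for y
    using mult_left_mono[OF W_ge_1 c, of y] by simp
  have "(\<integral>\<^sup>+y. U0 y \<partial>Q x) \<le> (\<integral>\<^sup>+y. ennreal ((1 - c) + c * W y) \<partial>Q x)"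
  proof (rule nn_integral_mono)
    fix y
    have "1 + c * (W y - 1) * indicator (- C) y \<le> (1 - c) + c * W y"
      using mult_left_mono[OF W_ge_1 c, of y] by (auto simp: indicator_def algebra_simps)
    then show "U0 y \<le> ennreal ((1 - c) + c * W y)"
      using U0_le[of y] unfolding c_def by (meson ennreal_leI order_trans)
  qed
  also have "\<dots> \<le> ennreal ((1 - c) + c * b_W)"
    by (rule nn_integral_residual_affine_le[OF x c affine_nonneg])
  finally show "(\<integral>\<^sup>+y. U0 y \<partial>Q x) \<le> ennreal (1 + r_phi \<phi> 1 / \<phi> 1 * (b_W - 1))"
    by (simp add: c_def algebra_simps)
qed

lemma SUP_residual_V0_le:
  "(SUP x\<in>C. \<integral>\<^sup>+y. V0 y \<partial>Q x) \<le> (SUP y\<in>C. ennreal (\<phi> (W y))) + ennreal b_W"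
proof (rule SUP_least)
  fix x assume x: "x \<in> C"
  define s where "s = (SUP y\<in>C. ennreal (\<phi> (W y)))"
  interpret prob_space "Q x" by (rule residual_kernel_on_C[OF x])
  have "(\<integral>\<^sup>+y. V0 y \<partial>Q x) \<le> (\<integral>\<^sup>+y. s + ennreal (W y) \<partial>Q x)"
  proof (rule nn_integral_mono)
    fix y
    have "ennreal (W y * indicator (- C) y) \<le> ennreal (W y)"
      using W_nonneg[of y] by (intro ennreal_leI) (simp add: indicator_def)
    then show "V0 y \<le> s + ennreal (W y)" using V0_le[of y] unfolding s_def by (meson add_left_mono order_trans)
  qed
  also have "\<dots> = s + (\<integral>\<^sup>+y. ennreal (W y) \<partial>Q x)"
    using residual_kernel_on_C(2)[OF x] emeasure_space_1
    by (subst nn_integral_add) (auto cong: measurable_cong_sets)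
  also have "\<dots> \<le> s + ennreal b_W"
    using residual_kernel_on_C(3)[OF x] by (rule add_left_mono)
  finally show "(\<integral>\<^sup>+y. V0 y \<partial>Q x) \<le> (SUP y\<in>C. ennreal (\<phi> (W y))) + ennreal b_W"
    unfolding s_def .
qed

lemma SUP_residual_V0_finite: "(SUP x\<in>C. \<integral>\<^sup>+y. V0 y \<partial>Q x) < \<infinity>"
proof -
  obtain K where K: "0 \<le> K" "\<And>x. V0 x \<le> ennreal (K * W x)" using V0_le_linear by blast
  have "(SUP x\<in>C. \<integral>\<^sup>+y. V0 y \<partial>Q x) \<le> ennreal (0 + K * b_W)"
  proof (rule SUP_least)
    fix x assume x: "x \<in> C"
    have "(\<integral>\<^sup>+y. V0 y \<partial>Q x) \<le> (\<integral>\<^sup>+y. ennreal (0 + K * W y) \<partial>Q x)"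
      using K(2) by (intro nn_integral_mono) simp
    also have "\<dots> \<le> ennreal (0 + K * b_W)"
      using K(1) W_nonneg by (intro nn_integral_residual_affine_le[OF x]) auto
    finally show "(\<integral>\<^sup>+y. V0 y \<partial>Q x) \<le> ennreal (0 + K * b_W)" .
  qed
  then show ?thesis using le_less_trans[OF _ ennreal_less_top] by simp
qed

end

theorem theorem5:
  fixes M :: "('a::linorder) measure"
    and P :: "'a \<Rightarrow> 'a measure"
    and \<nu> :: "'a measure"
    and \<epsilon> :: real
    and x0 :: 'a
    and W0 :: "'a \<Rightarrow> real"
    and phi :: "real \<Rightarrow> real"
    and C :: "'a set"
  defines "Q \<equiv> residual_kernel M P \<nu> \<epsilon>"
    and "U0 \<equiv> exp_sum_to_hit M P C (\<lambda>k y. ennreal (r_phi phi k))"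
    and "V0 \<equiv> exp_sum_to_hit M P C (\<lambda>k y. ennreal (phi (W0 y)))"
  assumes C_def: "C = {..x0}"
    and space_M: "space M = UNIV"
    and half_lines: "\<forall>a. {..a} \<in> sets M"
    and kernel: "P \<in> M \<rightarrow>\<^sub>M prob_algebra M"
    and monotone: "stoch_monotone M P"
    and eps_pos: "\<epsilon> > 0"
    and nu_prob: "\<nu> \<in> space (prob_algebra M)"
    and minor: "\<forall>x\<in>C. \<forall>A\<in>sets M. \<epsilon> * measure \<nu> A \<le> measure (P x) A"
    and W0_meas: "W0 \<in> borel_measurable M"
    and W0_ge: "\<forall>x. 1 \<le> W0 x"
    and phi_C: "phi_class phi"
    and drift: "\<forall>x. x \<notin> C \<longrightarrow>
                   (\<integral>\<^sup>+ y. ennreal (W0 y) \<partial>P x) \<le> ennreal (W0 x - phi (W0 x))"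
    and sup_PW0: "(SUP x\<in>C. \<integral>\<^sup>+ y. ennreal (W0 y) \<partial>P x) < \<infinity>"
  shows "(\<forall>x. U0 x < \<infinity>) \<and> (\<forall>x. V0 x < \<infinity>)
    \<and> (SUP x\<in>C. \<integral>\<^sup>+ y. U0 y \<partial>Q x) < \<infinity>
    \<and> (SUP x\<in>C. \<integral>\<^sup>+ y. V0 y \<partial>Q x) < \<infinity>
    \<and> (\<forall>x. U0 x \<le> ennreal (1 + r_phi phi 1 / phi 1 * (W0 x - 1) * indicator (- C) x))
    \<and> (\<forall>x. V0 x \<le> (SUP y\<in>C. ennreal (phi (W0 y))) + ennreal (W0 x * indicator (- C) x))
    \<and> (\<epsilon> < 1 \<longrightarrow>
         (let b = (enn2real (SUP x\<in>C. \<integral>\<^sup>+ y. ennreal (W0 y) \<partial>P x)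
                   - \<epsilon> * enn2real (\<integral>\<^sup>+ y. ennreal (W0 y) \<partial>\<nu>)) / (1 - \<epsilon>)
          in (SUP x\<in>C. \<integral>\<^sup>+ y. U0 y \<partial>Q x) \<le> ennreal (1 + r_phi phi 1 / phi 1 * (b - 1))
           \<and> (SUP x\<in>C. \<integral>\<^sup>+ y. V0 y \<partial>Q x) \<le> (SUP y\<in>C. ennreal (phi (W0 y))) + ennreal b))"
proof -
  interpret subgeometric_drift phi M P C \<nu> \<epsilon> W0
    using assms by unfold_locales (auto simp: C_def)
  have "U0 x < \<infinity>" for x
    using le_less_trans[OF U0_le ennreal_less_top] by (simp add: U0_def)
  moreover have "V0 x < \<infinity>" for x
    using V0_le_linear le_less_trans[OF _ ennreal_less_top] by (fastforce simp: V0_def)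
  moreover have "(SUP x\<in>C. \<integral>\<^sup>+ y. U0 y \<partial>Q x) < \<infinity>"
    using le_less_trans[OF SUP_residual_U0_le ennreal_less_top] by (simp add: Q_def U0_def)
  moreover have "\<epsilon> < 1 \<Longrightarrow> b_W = (enn2real (SUP x\<in>C. \<integral>\<^sup>+ y. ennreal (W0 y) \<partial>P x)
      - \<epsilon> * enn2real (\<integral>\<^sup>+ y. ennreal (W0 y) \<partial>\<nu>)) / (1 - \<epsilon>)"
    by (simp add: b_W_def)
  ultimately show ?thesis
    using U0_le V0_le SUP_residual_V0_finite SUP_residual_U0_le SUP_residual_V0_le
    unfolding Q_def U0_def V0_def Let_def by auto
qed

end
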